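(* Let $m,n\ge1$, $\mathcal{H}=\mathbb{R}^{m\times n}$ with $\langle\mathbf{A},\mathbf{B}\rangle_{\mathcal{H}}=\mathbf{A}^\intercal\mathbf{B}$, and let $\mathbf{V}\in\mathbb{R}^{n\times n}$ be a nonzero symmetric matrix such that $\langle\langle\mathbf{X},\mathbf{X}\rangle_{\mathcal{H}},\mathbf{V}/\|\mathbf{V}\|\rangle\ge0$ for all $\mathbf{X}\in\mathcal{H}$. Let $\mathcal{S}=\{\mathbf{X}_1,\dots,\mathbf{X}_N\}$ be a finite set of matrices in $\mathbb{R}^{m\times n}$ and define $$\mathcal{H}_{\max}\circ\mathcal{S}=\Big\{\Big(\big\langle\langle\mathbf{W},\mathbf{X}_1\rangle_{\mathcal{H}},\tfrac{\mathbf{V}}{\|\mathbf{V}\|}\big\rangle,\dots,\big\langle\langle\mathbf{W},\mathbf{X}_N\rangle_{\mathcal{H}},\tfrac{\mathbf{V}}{\|\mathbf{V}\|}\big\rangle\Big):\ \|\mathbf{W}\|_{\max}\le1\Big\}\subseteq\mathbb{R}^N.$$ Then $$R(\mathcal{H}_{\max}\circ\mathcal{S})\le n\max_{1\le i\le N}\|\mathbf{X}_i\|_1\sqrt{\frac{2(m\ln2+\ln n)}{N}}.$$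
   Context: $\langle\cdot,\cdot\rangle$ is the Frobenius inner product and $\|\mathbf{V}\|$ the Frobenius norm. For $\mathbf{X}\in\mathbb{R}^{m\times n}$: $\|\mathbf{X}\|_1=\max_{1\le j\le n}\sum_{i=1}^m|x_{ij}|$ and $\|\mathbf{X}\|_{\max}=\max_{i,j}|x_{ij}|$ (maximum over all entries). For $\mathcal{A}\subseteq\mathbb{R}^N$, the Rademacher complexity is $R(\mathcal{A})=\frac1N\mathbb{E}_{\bm\sigma}\big[\sup_{\mathbf{a}\in\mathcal{A}}\sum_{i=1}^N\sigma_ia_i\big]$, where $\sigma_1,\dots,\sigma_N$ are i.i.d. uniform on $\{\pm1\}$. *)

theory Defs
  imports "HOL-Analysis.Analysis"
begin

text \<open>Matrices in R^(m x n) are rendered as real^'n^'m (row index 'm, column index 'n).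
  The library inner product / norm on this type are the Frobenius ones.\<close>

definition mat_norm1 :: "real^'n^'m \<Rightarrow> real" where
  "mat_norm1 X = Max (range (\<lambda>j. \<Sum>i\<in>UNIV. \<bar>X $ i $ j\<bar>))"

definition mat_norm_max :: "real^'n^'m \<Rightarrow> real" where
  "mat_norm_max X = Max {\<bar>X $ i $ j\<bar> | i j. True}"

text \<open>Rademacher complexity of a set A of vectors in R^N (vectors given by their
  coordinates 0..N-1): expectation over uniform sign vectors, as an average over {-1,1}^N.\<close>

definition rademacher :: "nat \<Rightarrow> (nat \<Rightarrow> real) set \<Rightarrow> real" where
  "rademacher N A = (1 / real N) *
     ((\<Sum>\<sigma>\<in>PiE {..<N} (\<lambda>_. {-1, 1::real}). (SUP a\<in>A. \<Sum>i<N. \<sigma> i * a i)) / 2 ^ N)"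

end

theory Submission
  imports Defs "HOL-Probability.Hoeffding"
begin

text \<open>
  For fixed signs \<open>\<sigma>\<close>, linearity turns \<open>\<Sum>\<^sub>t \<sigma>\<^sub>t \<langle>W\<^sup>T X\<^sub>t, U\<rangle>\<close> into \<open>\<langle>W\<^sup>T S, U\<rangle>\<close> with
  \<open>S = \<Sum>\<^sub>t \<sigma>\<^sub>t X\<^sub>t\<close>. When \<open>\<parallel>W\<parallel>\<^sub>m\<^sub>a\<^sub>x \<le> 1\<close> every entry of \<open>W\<^sup>T S\<close> is at most \<open>\<parallel>S\<parallel>\<^sub>1\<close>, and
  the entries of the unit vector \<open>U = V/\<parallel>V\<parallel>\<close> have absolute sum at most \<open>n\<close> by
  Cauchy--Schwarz, so the supremum over \<open>W\<close> is at most \<open>n \<parallel>S\<parallel>\<^sub>1\<close>. Now \<open>\<parallel>S\<parallel>\<^sub>1\<close> is the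
  maximum of the \<open>n 2\<^sup>m\<close> signed column sums of \<open>S\<close>; each is linear in \<open>\<sigma>\<close> with
  coefficients bounded by \<open>max\<^sub>t \<parallel>X\<^sub>t\<parallel>\<^sub>1\<close>, so Massart's finite class lemma (via the
  sub-Gaussian bound \<open>cosh x \<le> exp (x\<^sup>2/2)\<close> for Rademacher signs) bounds the average of
  this maximum.
\<close>

definition sign_vectors :: "'a set \<Rightarrow> ('a \<Rightarrow> real) set" where
  "sign_vectors A = PiE A (\<lambda>_. {-1, 1})"

lemma finite_sign_vectors: "finite A \<Longrightarrow> finite (sign_vectors A)"
  unfolding sign_vectors_def by (intro finite_PiE) auto

lemma card_sign_vectors: "finite A \<Longrightarrow> card (sign_vectors A) = 2 ^ card A"
  unfolding sign_vectors_def by (simp add: card_PiE numeral_2_eq_2)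

lemma cosh_le_exp_half_square:
  fixes x :: real
  shows "cosh x \<le> exp (x\<^sup>2 / 2)"
proof -
  have "cosh y \<le> exp (y\<^sup>2 / 2)" if "y \<ge> 0" for y :: real
  proof -
    have "-(2*y) * (1/2) + ln (1 + (1/2) * (exp (2*y) - 1)) \<le> (2*y)\<^sup>2 / 8"
      using Hoeffdings_lemma_aux[of "2*y" "1/2"] that by simp
    then have "ln ((1 + exp (2*y)) / 2) \<le> y\<^sup>2 / 2 + y"
      by (simp add: field_simps power2_eq_square)
    then have "(1 + exp (2*y)) / 2 \<le> exp (y\<^sup>2 / 2 + y)"
      by (metis add_pos_pos exp_gt_zero exp_le_cancel_iff exp_ln half_gt_zero zero_less_one)
    then have "(1 + exp (2*y)) / 2 * exp (-y) \<le> exp (y\<^sup>2 / 2 + y) * exp (-y)"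
      by (intro mult_right_mono) auto
    then show ?thesis
      by (simp add: cosh_def field_simps flip: exp_add)
  qed
  from this[of "\<bar>x\<bar>"] show ?thesis
    by (cases "x \<ge> 0") auto
qed

lemma sign_average_exp_le:
  fixes a :: "nat \<Rightarrow> real"
  shows "(\<Sum>\<sigma>\<in>sign_vectors {..<N}. exp (\<Sum>t<N. \<sigma> t * a t)) / 2 ^ N \<le> exp ((\<Sum>t<N. (a t)\<^sup>2) / 2)"
proof -
  have "(\<Sum>\<sigma>\<in>sign_vectors {..<N}. exp (\<Sum>t<N. \<sigma> t * a t))
      = (\<Sum>\<sigma>\<in>sign_vectors {..<N}. \<Prod>t<N. exp (a t * \<sigma> t))"
    by (simp add: exp_sum mult.commute)
  also have "\<dots> = (\<Prod>t<N. \<Sum>y\<in>{-1,1}. exp (a t * y))"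
    unfolding sign_vectors_def by (rule prod_sum_PiE[symmetric]) auto
  also have "\<dots> = (\<Prod>t<N. 2 * cosh (a t))"
    by (intro prod.cong refl) (simp add: cosh_def field_simps)
  also have "\<dots> \<le> (\<Prod>t<N. 2 * exp ((a t)\<^sup>2 / 2))"
    by (intro prod_mono conjI mult_left_mono cosh_le_exp_half_square) (auto simp: cosh_def)
  also have "\<dots> = 2 ^ N * exp ((\<Sum>t<N. (a t)\<^sup>2) / 2)"
    by (simp add: prod.distrib exp_sum sum_divide_distrib)
  finally show ?thesis
    by (simp add: field_simps)
qed

lemma exp_sign_average_Max_le:
  fixes a :: "'k \<Rightarrow> nat \<Rightarrow> real"
  assumes "finite I" "I \<noteq> {}" "l \<ge> 0"
  shows "exp (l * ((\<Sum>\<sigma>\<in>sign_vectors {..<N}. Max ((\<lambda>k. \<Sum>t<N. \<sigma> t * a k t) ` I)) / 2 ^ N))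
           \<le> (\<Sum>k\<in>I. exp (l\<^sup>2 * (\<Sum>t<N. (a k t)\<^sup>2) / 2))"
proof -
  define \<Sigma> where "\<Sigma> = sign_vectors {..<N}"
  define Z where "Z = (\<lambda>\<sigma>. Max ((\<lambda>k. \<Sum>t<N. \<sigma> t * a k t) ` I))"
  have fin: "finite \<Sigma>" and card: "card \<Sigma> = 2 ^ N"
    unfolding \<Sigma>_def by (simp_all add: finite_sign_vectors card_sign_vectors)
  have "exp (l * ((\<Sum>\<sigma>\<in>\<Sigma>. Z \<sigma>) / 2 ^ N)) = exp (\<Sum>\<sigma>\<in>\<Sigma>. (1 / 2 ^ N) *\<^sub>R (l * Z \<sigma>))"
    by (simp add: sum_distrib_left sum_divide_distrib)
  also have "\<dots> \<le> (\<Sum>\<sigma>\<in>\<Sigma>. (1 / 2 ^ N) * exp (l * Z \<sigma>))"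
    using fin card by (intro convex_on_sum[OF _ _ exp_convex]) auto
  also have "\<dots> \<le> (\<Sum>\<sigma>\<in>\<Sigma>. (1 / 2 ^ N) * (\<Sum>k\<in>I. exp (l * (\<Sum>t<N. \<sigma> t * a k t))))"
  proof (intro sum_mono mult_left_mono)
    fix \<sigma>
    have "Z \<sigma> \<in> (\<lambda>k. \<Sum>t<N. \<sigma> t * a k t) ` I"
      unfolding Z_def using assms(1,2) by (intro Max_in) auto
    then obtain k where "k \<in> I" "Z \<sigma> = (\<Sum>t<N. \<sigma> t * a k t)"
      by blast
    then show "exp (l * Z \<sigma>) \<le> (\<Sum>k\<in>I. exp (l * (\<Sum>t<N. \<sigma> t * a k t)))"
      using assms(1) by (auto intro: member_le_sum)
  qed simp
  also have "\<dots> = (\<Sum>k\<in>I. (\<Sum>\<sigma>\<in>\<Sigma>. exp (\<Sum>t<N. \<sigma> t * (l * a k t))) / 2 ^ N)"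
    by (simp add: sum_distrib_left sum_divide_distrib sum.swap[of _ \<Sigma> I] mult_ac)
  also have "\<dots> \<le> (\<Sum>k\<in>I. exp (l\<^sup>2 * (\<Sum>t<N. (a k t)\<^sup>2) / 2))"
  proof (intro sum_mono)
    fix k
    show "(\<Sum>\<sigma>\<in>\<Sigma>. exp (\<Sum>t<N. \<sigma> t * (l * a k t))) / 2 ^ N \<le> exp (l\<^sup>2 * (\<Sum>t<N. (a k t)\<^sup>2) / 2)"
      using sign_average_exp_le[where N=N and a="\<lambda>t. l * a k t"]
      by (simp add: \<Sigma>_def power_mult_distrib sum_distrib_left)
  qed
  finally show ?thesis
    unfolding \<Sigma>_def Z_def .
qed

lemma massart_finite_class:
  fixes a :: "'k \<Rightarrow> nat \<Rightarrow> real"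
  assumes "finite I" "card I \<ge> 2" "N \<ge> 1"
    and bound: "\<And>k t. k \<in> I \<Longrightarrow> t < N \<Longrightarrow> \<bar>a k t\<bar> \<le> M"
  shows "(\<Sum>\<sigma>\<in>sign_vectors {..<N}. Max ((\<lambda>k. \<Sum>t<N. \<sigma> t * a k t) ` I)) / 2 ^ N
           \<le> M * sqrt (2 * real N * ln (real (card I)))"
proof -
  define avg where "avg = (\<Sum>\<sigma>\<in>sign_vectors {..<N}. Max ((\<lambda>k. \<Sum>t<N. \<sigma> t * a k t) ` I)) / 2 ^ N"
  define L where "L = ln (real (card I))"
  have I: "I \<noteq> {}" and L: "L > 0" and expL: "exp L = real (card I)"
    using assms(2) by (auto simp: L_def)
  obtain k0 where "k0 \<in> I" using I by blast
  then have "M \<ge> 0"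
    using bound[of k0 0] assms(3) by linarith
  show ?thesis
  proof (cases "M = 0")
    case True
    then have "(\<lambda>k. \<Sum>t<N. \<sigma> t * a k t) ` I = {0}" for \<sigma>
      using I bound by auto
    with True show ?thesis by simp
  next
    case False
    with \<open>M \<ge> 0\<close> have M: "M > 0" by simp
    define s where "s = sqrt (2 * real N * L)"
    have s: "s > 0" "s\<^sup>2 = 2 * real N * L"
      using L assms(3) by (auto simp: s_def)
    \<comment> \<open>\<open>l\<close> minimises \<open>(ln (card I) + l\<^sup>2 * N * M\<^sup>2 / 2) / l\<close>\<close>
    define l where "l = s / (real N * M)"
    have l: "l > 0" "l\<^sup>2 * (real N * M\<^sup>2) / 2 = L"
      using s M assms(3) by (auto simp: l_def field_simps power2_eq_square)
    have square_sum: "(\<Sum>t<N. (a k t)\<^sup>2) \<le> real N * M\<^sup>2" if "k \<in> I" for k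
    proof -
      have "(a k t)\<^sup>2 \<le> M\<^sup>2" if "t < N" for t
        using power_mono[OF bound[OF \<open>k \<in> I\<close> that], of 2] by simp
      then show ?thesis
        using sum_mono[of "{..<N}" "\<lambda>t. (a k t)\<^sup>2" "\<lambda>_. M\<^sup>2"] by simp
    qed
    have "exp (l * avg) \<le> (\<Sum>k\<in>I. exp (l\<^sup>2 * (\<Sum>t<N. (a k t)\<^sup>2) / 2))"
      unfolding avg_def using l(1) by (intro exp_sign_average_Max_le assms(1) I) simp
    also have "\<dots> \<le> (\<Sum>k\<in>I. exp (l\<^sup>2 * (real N * M\<^sup>2) / 2))"
      using square_sum by (intro sum_mono) (simp add: mult_left_mono divide_right_mono)
    also have "\<dots> = exp L * exp L"
      by (simp add: l(2) expL)
    also have "\<dots> = exp (2 * L)"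
      by (simp flip: exp_add)
    finally have "avg \<le> 2 * L / l"
      using l(1) by (simp add: field_simps)
    also have "2 * L / l = M * s"
      using s M assms(3) by (simp add: l_def field_simps power2_eq_square)
    finally show ?thesis
      unfolding avg_def s_def L_def .
  qed
qed

lemma abs_le_mat_norm_max:
  fixes W :: "real^'n^'m"
  shows "\<bar>W$i$j\<bar> \<le> mat_norm_max W"
proof -
  have "{\<bar>W$i$j\<bar> | i j. True} = (\<lambda>(i,j). \<bar>W$i$j\<bar>) ` UNIV" by auto
  then show ?thesis
    unfolding mat_norm_max_def by (intro Max_ge) auto
qed

lemma column_abs_sum_le_mat_norm1:
  fixes X :: "real^'n^'m"
  shows "(\<Sum>i\<in>UNIV. \<bar>X$i$j\<bar>) \<le> mat_norm1 X"
  unfolding mat_norm1_def by (intro Max_ge) auto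

lemma mat_norm1_nonneg: "mat_norm1 X \<ge> 0"
  using column_abs_sum_le_mat_norm1[of X] sum_nonneg[of UNIV "\<lambda>i. \<bar>X$i$j\<bar>" for j]
  by (meson abs_ge_zero order_trans)

lemma abs_transpose_mult_entry_le:
  fixes W S :: "real^'n^'m"
  assumes "mat_norm_max W \<le> 1"
  shows "\<bar>(transpose W ** S)$k$l\<bar> \<le> mat_norm1 S"
proof -
  have "\<bar>(transpose W ** S)$k$l\<bar> = \<bar>\<Sum>i\<in>UNIV. W$i$k * S$i$l\<bar>"
    by (simp add: matrix_matrix_mult_def transpose_def)
  also have "\<dots> \<le> (\<Sum>i\<in>UNIV. \<bar>W$i$k\<bar> * \<bar>S$i$l\<bar>)"
    by (rule order_trans[OF sum_abs]) (simp add: abs_mult)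
  also have "\<dots> \<le> (\<Sum>i\<in>UNIV. \<bar>S$i$l\<bar>)"
    using abs_le_mat_norm_max[of W] assms
    by (intro sum_mono mult_left_le_one_le) (auto intro: order_trans)
  also have "\<dots> \<le> mat_norm1 S"
    by (rule column_abs_sum_le_mat_norm1)
  finally show ?thesis .
qed

lemma sum_abs_entries_le_sqrt_card_mult_norm:
  fixes U :: "real^'b^'a"
  shows "(\<Sum>k\<in>UNIV. \<Sum>l\<in>UNIV. \<bar>U$k$l\<bar>) \<le> sqrt (real (CARD('a) * CARD('b))) * norm U"
proof -
  have "(\<Sum>k\<in>UNIV. \<Sum>l\<in>UNIV. \<bar>U$k$l\<bar>) = (\<Sum>(k,l)\<in>UNIV. \<bar>U$k$l\<bar>)"
    by (simp add: sum.cartesian_product UNIV_Times_UNIV[symmetric] del: UNIV_Times_UNIV)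
  also have "\<dots> \<le> sqrt ((\<Sum>(k,l)\<in>UNIV. \<bar>U$k$l\<bar>\<^sup>2) * card (UNIV :: ('a \<times> 'b) set))"
    using sum_squared_le_sum_of_squares[of "\<lambda>(k,l). \<bar>U$k$l\<bar>" UNIV]
    by (intro real_le_rsqrt) (simp add: split_def)
  also have "(\<Sum>(k,l)\<in>UNIV. \<bar>U$k$l\<bar>\<^sup>2) = (norm U)\<^sup>2"
    unfolding power2_norm_eq_inner
    by (simp add: inner_vec_def power2_eq_square sum.cartesian_product
        UNIV_Times_UNIV[symmetric] del: UNIV_Times_UNIV)
  finally show ?thesis
    by (simp add: real_sqrt_mult card_cartesian_product UNIV_Times_UNIV[symmetric] mult.commute del: UNIV_Times_UNIV)
qed

lemma inner_le_bound_mult_sum_abs_entries: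
  fixes B U :: "real^'b^'a"
  assumes "\<And>k l. \<bar>B$k$l\<bar> \<le> c"
  shows "inner B U \<le> c * (\<Sum>k\<in>UNIV. \<Sum>l\<in>UNIV. \<bar>U$k$l\<bar>)"
proof -
  have "inner B U = (\<Sum>k\<in>UNIV. \<Sum>l\<in>UNIV. B$k$l * U$k$l)"
    by (simp add: inner_vec_def)
  also have "\<dots> \<le> (\<Sum>k\<in>UNIV. \<Sum>l\<in>UNIV. c * \<bar>U$k$l\<bar>)"
  proof (intro sum_mono)
    fix k l
    have "B$k$l * U$k$l \<le> \<bar>B$k$l\<bar> * \<bar>U$k$l\<bar>"
      by (simp flip: abs_mult)
    also have "\<dots> \<le> c * \<bar>U$k$l\<bar>"
      by (intro mult_right_mono assms) simp
    finally show "B$k$l * U$k$l \<le> c * \<bar>U$k$l\<bar>" .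
  qed
  finally show ?thesis
    by (simp add: sum_distrib_left)
qed

lemma inner_transpose_mult_le:
  fixes W S :: "real^'n^'m" and U :: "real^'n^'n"
  assumes "mat_norm_max W \<le> 1"
  shows "inner (transpose W ** S) U \<le> real CARD('n) * norm U * mat_norm1 S"
proof -
  have "inner (transpose W ** S) U \<le> mat_norm1 S * (\<Sum>k\<in>UNIV. \<Sum>l\<in>UNIV. \<bar>U$k$l\<bar>)"
    by (intro inner_le_bound_mult_sum_abs_entries abs_transpose_mult_entry_le assms)
  also have "\<dots> \<le> mat_norm1 S * (real CARD('n) * norm U)"
    using sum_abs_entries_le_sqrt_card_mult_norm[of U] mat_norm1_nonneg[of S] by (intro mult_left_mono) simp_all
  finally show ?thesis
    by (simp add: mult_ac)
qed

lemma sum_inner_transpose_mult: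
  fixes W :: "real^'n^'m" and X :: "'t \<Rightarrow> real^'n^'m" and U :: "real^'n^'n"
  shows "(\<Sum>t\<in>T. c t * inner (transpose W ** X t) U) = inner (transpose W ** (\<Sum>t\<in>T. c t *\<^sub>R X t)) U"
  by (simp add: inner_vec_def matrix_matrix_mult_def sum_distrib_left sum_distrib_right mult_ac
      sum.swap[of _ T])

definition signed_column_sum :: "real^'n^'m \<Rightarrow> 'n \<Rightarrow> ('m \<Rightarrow> real) \<Rightarrow> real" where
  "signed_column_sum X j s = (\<Sum>i\<in>UNIV. s i * X$i$j)"

lemma abs_signed_column_sum_le:
  assumes "s \<in> sign_vectors UNIV"
  shows "\<bar>signed_column_sum X j s\<bar> \<le> mat_norm1 X"
proof -
  have "\<bar>signed_column_sum X j s\<bar> \<le> (\<Sum>i\<in>UNIV. \<bar>s i\<bar> * \<bar>X$i$j\<bar>)"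
    unfolding signed_column_sum_def by (rule order_trans[OF sum_abs]) (simp add: abs_mult)
  also have "\<dots> = (\<Sum>i\<in>UNIV. \<bar>X$i$j\<bar>)"
  proof (intro sum.cong refl)
    fix i
    have "s i \<in> {-1, 1}"
      using assms by (auto simp: sign_vectors_def PiE_iff)
    then show "\<bar>s i\<bar> * \<bar>X$i$j\<bar> = \<bar>X$i$j\<bar>"
      by auto
  qed
  finally show ?thesis
    using column_abs_sum_le_mat_norm1 order_trans by blast
qed

lemma mat_norm1_eq_Max_signed_column_sum:
  fixes X :: "real^'n^'m"
  shows "mat_norm1 X = Max ((\<lambda>(j,s). signed_column_sum X j s) ` (UNIV \<times> sign_vectors UNIV))"
proof (rule sym, rule Max_eqI)
  show "finite ((\<lambda>(j,s). signed_column_sum X j s) ` (UNIV \<times> sign_vectors (UNIV :: 'm set)))"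
    by (simp add: finite_sign_vectors)
  show "y \<le> mat_norm1 X" if "y \<in> (\<lambda>(j,s). signed_column_sum X j s) ` (UNIV \<times> sign_vectors UNIV)" for y
    using that abs_signed_column_sum_le[of _ X] by (fastforce dest: abs_le_D1)
  have "mat_norm1 X \<in> range (\<lambda>j. \<Sum>i\<in>UNIV. \<bar>X$i$j\<bar>)"
    unfolding mat_norm1_def by (intro Max_in) auto
  then obtain j where j: "mat_norm1 X = (\<Sum>i\<in>UNIV. \<bar>X$i$j\<bar>)"
    by blast
  define s where "s i = (if X$i$j \<ge> 0 then 1 else - 1 :: real)" for i
  have "s \<in> sign_vectors UNIV"
    by (auto simp: s_def sign_vectors_def split: if_splits)
  moreover have "mat_norm1 X = signed_column_sum X j s"
    unfolding j signed_column_sum_def by (intro sum.cong refl) (simp add: s_def)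
  ultimately show "mat_norm1 X \<in> (\<lambda>(j,s). signed_column_sum X j s) ` (UNIV \<times> sign_vectors UNIV)"
    by (intro image_eqI[where x="(j, s)"]) auto
qed

lemma signed_column_sum_sum:
  "signed_column_sum (\<Sum>t\<in>T. c t *\<^sub>R X t) j s = (\<Sum>t\<in>T. c t * signed_column_sum (X t) j s)"
  by (simp add: signed_column_sum_def sum_distrib_left mult_ac sum.swap[of _ T])

lemma SUP_sign_pairing_le:
  fixes X :: "nat \<Rightarrow> real^'n^'m" and U :: "real^'n^'n"
  assumes "norm U = 1"
  shows "(SUP a\<in>{(\<lambda>t. inner (transpose W ** X t) U) | W :: real^'n^'m. mat_norm_max W \<le> 1}. \<Sum>t<N. \<sigma> t * a t)
    \<le> real CARD('n) * Max ((\<lambda>(j,s). \<Sum>t<N. \<sigma> t * signed_column_sum (X t) j s) ` (UNIV \<times> sign_vectors UNIV))"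
proof (rule cSUP_least)
  have "mat_norm_max (0 :: real^'n^'m) = 0"
    unfolding mat_norm_max_def by simp
  then have "(\<lambda>t. inner (transpose 0 ** X t) U) \<in> {(\<lambda>t. inner (transpose W ** X t) U) | W :: real^'n^'m. mat_norm_max W \<le> 1}"
    by force
  then show "{(\<lambda>t. inner (transpose W ** X t) U) | W :: real^'n^'m. mat_norm_max W \<le> 1} \<noteq> {}"
    by blast
next
  fix a assume "a \<in> {(\<lambda>t. inner (transpose W ** X t) U) | W :: real^'n^'m. mat_norm_max W \<le> 1}"
  then obtain W :: "real^'n^'m" where W: "mat_norm_max W \<le> 1" and a: "a = (\<lambda>t. inner (transpose W ** X t) U)"
    by blast
  have "(\<Sum>t<N. \<sigma> t * a t) = inner (transpose W ** (\<Sum>t<N. \<sigma> t *\<^sub>R X t)) U"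
    unfolding a by (rule sum_inner_transpose_mult)
  also have "\<dots> \<le> real CARD('n) * mat_norm1 (\<Sum>t<N. \<sigma> t *\<^sub>R X t)"
    using inner_transpose_mult_le[OF W, where U=U and S="\<Sum>t<N. \<sigma> t *\<^sub>R X t"] assms by simp
  finally show "(\<Sum>t<N. \<sigma> t * a t) \<le> real CARD('n) * Max ((\<lambda>(j,s). \<Sum>t<N. \<sigma> t * signed_column_sum (X t) j s) ` (UNIV \<times> sign_vectors UNIV))"
    by (simp add: mat_norm1_eq_Max_signed_column_sum signed_column_sum_sum case_prod_beta)
qed

lemma sign_average_Max_signed_column_sum_le:
  fixes X :: "nat \<Rightarrow> real^'n^'m"
  assumes "N \<ge> 1"
  shows "(\<Sum>\<sigma>\<in>sign_vectors {..<N}.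
            Max ((\<lambda>(j,s). \<Sum>t<N. \<sigma> t * signed_column_sum (X t) j s) ` (UNIV \<times> sign_vectors UNIV))) / 2 ^ N
         \<le> Max ((\<lambda>t. mat_norm1 (X t)) ` {..<N})
           * sqrt (2 * real N * (real CARD('m) * ln 2 + ln (real CARD('n))))"
proof -
  define I where "I = (UNIV :: 'n set) \<times> sign_vectors (UNIV :: 'm set)"
  have card_I: "card I = CARD('n) * 2 ^ CARD('m)"
    by (simp add: I_def card_cartesian_product card_sign_vectors)
  have "1 * 2 ^ 1 \<le> CARD('n) * 2 ^ CARD('m)"
    by (intro mult_le_mono power_increasing) auto
  then have "card I \<ge> 2"
    by (simp add: card_I)
  moreover have "\<bar>signed_column_sum (X t) (fst k) (snd k)\<bar> \<le> Max ((\<lambda>t. mat_norm1 (X t)) ` {..<N})"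
    if "k \<in> I" "t < N" for k t
    using that abs_signed_column_sum_le[of "snd k" "X t" "fst k"]
    by (auto simp: I_def intro: order_trans[OF _ Max_ge])
  moreover have "ln (real (card I)) = real CARD('m) * ln 2 + ln (real CARD('n))"
    by (simp add: card_I ln_mult ln_realpow)
  moreover have "finite I"
    by (simp add: I_def finite_sign_vectors)
  ultimately show ?thesis
    using massart_finite_class[of I N "\<lambda>k t. signed_column_sum (X t) (fst k) (snd k)"] assms
    unfolding I_def case_prod_unfold by simp
qed

theorem lemma5:
  fixes V :: "real^'n^'n" and X :: "nat \<Rightarrow> real^'n^'m" and N :: nat
  assumes "N \<ge> 1"
    and "V \<noteq> 0"
    and "transpose V = V"
    and "\<forall>Y :: real^'n^'m. inner (transpose Y ** Y) (V /\<^sub>R norm V) \<ge> 0"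
  shows "rademacher N
           {(\<lambda>i. inner (transpose W ** X i) (V /\<^sub>R norm V)) | W :: real^'n^'m. mat_norm_max W \<le> 1}
         \<le> real CARD('n) * Max ((\<lambda>i. mat_norm1 (X i)) ` {..<N})
           * sqrt (2 * (real CARD('m) * ln 2 + ln (real CARD('n))) / real N)"
proof -
  define Z where "Z \<sigma> = Max ((\<lambda>(j,s). \<Sum>t<N. \<sigma> t * signed_column_sum (X t) j s) ` (UNIV \<times> sign_vectors UNIV))"
    for \<sigma> :: "nat \<Rightarrow> real"
  define M where "M = Max ((\<lambda>i. mat_norm1 (X i)) ` {..<N})"
  define L where "L = real CARD('m) * ln 2 + ln (real CARD('n))"
  have "norm (V /\<^sub>R norm V) = 1"
    using assms(2) by simp
  then have "rademacher N {(\<lambda>i. inner (transpose W ** X i) (V /\<^sub>R norm V)) | W :: real^'n^'m. mat_norm_max W \<le> 1}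
      \<le> 1 / real N * ((\<Sum>\<sigma>\<in>sign_vectors {..<N}. real CARD('n) * Z \<sigma>) / 2 ^ N)"
    unfolding rademacher_def sign_vectors_def[symmetric] Z_def
    by (intro mult_left_mono divide_right_mono sum_mono SUP_sign_pairing_le) simp_all
  also have "\<dots> = real CARD('n) / real N * ((\<Sum>\<sigma>\<in>sign_vectors {..<N}. Z \<sigma>) / 2 ^ N)"
    by (simp flip: sum_distrib_left)
  also have "\<dots> \<le> real CARD('n) / real N * (M * sqrt (2 * real N * L))"
    unfolding Z_def M_def L_def
    by (intro mult_left_mono sign_average_Max_signed_column_sum_le assms(1)) simp
  also have "\<dots> = real CARD('n) * M * sqrt (2 * L / real N)"
    using assms(1) by (simp add: real_sqrt_divide real_sqrt_mult field_simps)
  finally show ?thesis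
    unfolding M_def L_def .
qed

end
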